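(* Let $R$ be a standard rule and let $(N,c,E,h)$ be a historical claims problem, with history-adjusted claims vector $\widetilde{c}$. Then there exists $\overline{\lambda}\in\mathbb{R}_+$ such that $$\sum_{i\in N}\min\left\{c_i,\,R_i(N,\widetilde{c},E)+\overline{\lambda}\right\}=E.$$ Moreover, if $C=\sum_{i\in N}c_i>E$, then such $\overline{\lambda}$ is unique; whereas if $C=E$, such $\overline{\lambda}$ is not unique, but the vector $\left(\min\{c_i,R_i(N,\widetilde{c},E)+\overline{\lambda}\}\right)_{i\in N}$ is the same for all such $\overline{\lambda}$.
   Context: Agents are elements of $\mathbb{N}$; $N$ denotes a nonempty finite subset of $\mathbb{N}$. A (standard) claims problem is a triple $(N,c,E)$ with $c\in\mathbb{R}_+^N$, $E\in\mathbb{R}_+$, $C=\sum_{i\in N}c_i>0$ and $E\le C$. An allocation for it is $x\in\mathbb{R}^N$ with $0\le x_i\le c_i$ for all $i$ and $\sum_{i\in N}x_i=E$. A standard rule $R$ assigns to every standard claims problem $(N,c,E)$ an allocation $R(N,c,E)$. A history for $N$ is a finite sequence $h=\{(c^{(t)},x^{(t)})\}_{t=1}^{|T|}$ where, for each $t$, $c^{(t)}\in\mathbb{R}_+^N$ and $x^{(t)}$ is an allocation of the standard claims problem $(N,c^{(t)},\sum_{i}x^{(t)}_i)$ (in particular $0\le x_i^{(t)}\le c_i^{(t)}$). A historical claims problem is a 4-tuple $(N,c,E,h)$ where $(N,c,E)$ is a standard claims problem and $h$ is a history for $N$. For each $i\in N$ let $\Delta^c_i=\sum_{t=1}^{|T|}c_i^{(t)}$,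 $\Delta^x_i=\sum_{t=1}^{|T|}x_i^{(t)}$, and the history-adjusted claim $\widetilde{c}_i=c_i+\Delta^c_i-\Delta^x_i$ (so $\widetilde{c}\ge c$ and $(N,\widetilde{c},E)$ is a standard claims problem). *)

theory Defs
  imports Complex_Main
begin

(* Agents are natural numbers; N is a nonempty finite set of agents.
   Vectors in R^N are represented as functions nat => real; only values on N matter. *)

definition claims_problem :: "nat set \<Rightarrow> (nat \<Rightarrow> real) \<Rightarrow> real \<Rightarrow> bool" where
  "claims_problem N c E \<longleftrightarrow> finite N \<and> N \<noteq> {} \<and> (\<forall>i\<in>N. 0 \<le> c i) \<and> 0 \<le> E
      \<and> sum c N > 0 \<and> E \<le> sum c N"

definition is_allocation :: "nat set \<Rightarrow> (nat \<Rightarrow> real) \<Rightarrow> real \<Rightarrow> (nat \<Rightarrow> real) \<Rightarrow> bool" where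
  "is_allocation N c E x \<longleftrightarrow> (\<forall>i\<in>N. 0 \<le> x i \<and> x i \<le> c i) \<and> sum x N = E"

definition standard_rule :: "(nat set \<Rightarrow> (nat \<Rightarrow> real) \<Rightarrow> real \<Rightarrow> (nat \<Rightarrow> real)) \<Rightarrow> bool" where
  "standard_rule R \<longleftrightarrow> (\<forall>N c E. claims_problem N c E \<longrightarrow> is_allocation N c E (R N c E))"

definition is_history :: "nat set \<Rightarrow> ((nat \<Rightarrow> real) \<times> (nat \<Rightarrow> real)) list \<Rightarrow> bool" where
  "is_history N h \<longleftrightarrow> (\<forall>(ct, xt) \<in> set h. (\<forall>i\<in>N. 0 \<le> ct i)
      \<and> claims_problem N ct (sum xt N) \<and> is_allocation N ct (sum xt N) xt)"

definition historical_claims_problem ::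
  "nat set \<Rightarrow> (nat \<Rightarrow> real) \<Rightarrow> real \<Rightarrow> ((nat \<Rightarrow> real) \<times> (nat \<Rightarrow> real)) list \<Rightarrow> bool" where
  "historical_claims_problem N c E h \<longleftrightarrow> claims_problem N c E \<and> is_history N h"

definition adjusted_claims ::
  "(nat \<Rightarrow> real) \<Rightarrow> ((nat \<Rightarrow> real) \<times> (nat \<Rightarrow> real)) list \<Rightarrow> nat \<Rightarrow> real" where
  "adjusted_claims c h i = c i + (\<Sum>t<length h. fst (h ! t) i) - (\<Sum>t<length h. snd (h ! t) i)"

end

theory Submission
  imports Defs
begin

text \<open>The map \<open>\<lambda> \<mapsto> \<Sum>i. min (c i) (x i + \<lambda>)\<close> is continuous and non-decreasing; it is at
  most \<open>\<Sum>i. x i = E\<close> at \<open>\<lambda> = 0\<close> and equals \<open>\<Sum>i. c i \<ge> E\<close> for large \<open>\<lambda>\<close>, so the intermediate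
  value theorem gives a solution. Monotonicity of each summand forces any two solutions to
  agree termwise. Between two distinct solutions every summand is constant, which is only
  possible once it is capped at \<open>c i\<close>; hence a second solution exists exactly when
  \<open>\<Sum>i. c i = E\<close>. The history only enters through \<open>c \<le> ct\<close> for the adjusted claims \<open>ct\<close>,
  which makes \<open>(N, ct, E)\<close> a claims problem, so that \<open>R\<close> yields an allocation \<open>x\<close>.\<close>

lemma sum_min_shift_eq_sum_cap:
  fixes c x :: "'a \<Rightarrow> real"
  assumes "finite N" and "(\<Sum>i\<in>N. \<bar>c i - x i\<bar>) \<le> l"
  shows "(\<Sum>i\<in>N. min (c i) (x i + l)) = sum c N"
proof (rule sum.cong)
  fix i assume "i \<in> N"
  then have "\<bar>c i - x i\<bar> \<le> (\<Sum>i\<in>N. \<bar>c i - x i\<bar>)"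
    using assms(1) by (intro member_le_sum) auto
  then show "min (c i) (x i + l) = c i" using assms(2) by linarith
qed simp

lemma sum_min_shift_exists:
  fixes c x :: "'a \<Rightarrow> real"
  assumes "finite N" and "sum x N = E" and "E \<le> sum c N"
  shows "\<exists>l\<ge>0. (\<Sum>i\<in>N. min (c i) (x i + l)) = E"
proof -
  define f where "f l = (\<Sum>i\<in>N. min (c i) (x i + l))" for l
  define L where "L = (\<Sum>i\<in>N. \<bar>c i - x i\<bar>)"
  have "f 0 \<le> E"
    unfolding f_def assms(2)[symmetric] by (intro sum_mono) simp
  moreover have "E \<le> f L"
    using sum_min_shift_eq_sum_cap[OF assms(1)] assms(3) unfolding f_def L_def by simp
  moreover have "0 \<le> L" unfolding L_def by (simp add: sum_nonneg)
  moreover have "isCont f l" for l unfolding f_def by (intro continuous_intros)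
  ultimately obtain l where "0 \<le> l" "f l = E" using IVT[of f 0 E L] by auto
  then show ?thesis unfolding f_def by blast
qed

lemma sum_min_shift_eq_imp_summand_eq:
  fixes c x :: "'a \<Rightarrow> real"
  assumes "finite N" and "i \<in> N"
    and "(\<Sum>i\<in>N. min (c i) (x i + l1)) = (\<Sum>i\<in>N. min (c i) (x i + l2))"
  shows "min (c i) (x i + l1) = min (c i) (x i + l2)"
proof -
  have "min (c i) (x i + a) = min (c i) (x i + b)"
    if "a \<le> b" and "(\<Sum>i\<in>N. min (c i) (x i + a)) = (\<Sum>i\<in>N. min (c i) (x i + b))" for a b
    using sum_mono_inv[OF that(2) _ assms(2,1)] that(1) by force
  then show ?thesis using assms(3) by (metis nle_le)
qed

lemma sum_min_shift_unique:
  fixes c x :: "'a \<Rightarrow> real"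
  assumes "finite N" and "E < sum c N"
    and "(\<Sum>i\<in>N. min (c i) (x i + l1)) = E" and "(\<Sum>i\<in>N. min (c i) (x i + l2)) = E"
  shows "l1 = l2"
proof -
  have False if "a < b"
    and sol: "(\<Sum>i\<in>N. min (c i) (x i + a)) = E" "(\<Sum>i\<in>N. min (c i) (x i + b)) = E" for a b
  proof -
    have "min (c i) (x i + a) = c i" if "i \<in> N" for i
      using sum_min_shift_eq_imp_summand_eq[OF assms(1) \<open>i \<in> N\<close>, of c x a b] sol \<open>a < b\<close>
      by (simp add: min_def split: if_splits)
    then have "(\<Sum>i\<in>N. min (c i) (x i + a)) = sum c N" by simp
    with sol assms(2) show False by simp
  qed
  then show ?thesis using assms(3,4) by (metis linorder_neqE)
qed

lemma sum_min_shift_not_unique: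
  fixes c x :: "'a \<Rightarrow> real"
  assumes "finite N" and "sum c N = E"
  shows "\<exists>l1 l2. 0 \<le> l1 \<and> 0 \<le> l2 \<and> l1 \<noteq> l2
    \<and> (\<Sum>i\<in>N. min (c i) (x i + l1)) = E \<and> (\<Sum>i\<in>N. min (c i) (x i + l2)) = E"
proof -
  define L where "L = (\<Sum>i\<in>N. \<bar>c i - x i\<bar>)"
  have "0 \<le> L" unfolding L_def by (simp add: sum_nonneg)
  moreover have "(\<Sum>i\<in>N. min (c i) (x i + l)) = E" if "L \<le> l" for l
    using sum_min_shift_eq_sum_cap[OF assms(1)] that assms(2) unfolding L_def by simp
  ultimately show ?thesis by (intro exI[of _ L] exI[of _ "L + 1"]) simp
qed

lemma adjusted_claims_ge:
  assumes "is_history N h" and "i \<in> N"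
  shows "c i \<le> adjusted_claims c h i"
proof -
  have "snd (h ! t) i \<le> fst (h ! t) i" if "t < length h" for t
  proof -
    have "h ! t \<in> set h" using that by simp
    with assms show ?thesis
      unfolding is_history_def is_allocation_def by (cases "h ! t") fastforce
  qed
  then have "(\<Sum>t<length h. snd (h ! t) i) \<le> (\<Sum>t<length h. fst (h ! t) i)"
    by (intro sum_mono) simp
  then show ?thesis unfolding adjusted_claims_def by simp
qed

lemma claims_problem_adjusted_claims:
  assumes "claims_problem N c E" and "is_history N h"
  shows "claims_problem N (adjusted_claims c h) E"
proof -
  have "sum c N \<le> sum (adjusted_claims c h) N"
    using adjusted_claims_ge[OF assms(2)] by (intro sum_mono)
  then show ?thesis
    using assms(1) adjusted_claims_ge[OF assms(2)]
    unfolding claims_problem_def by (auto intro: order_trans)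
qed

theorem proposition1:
  fixes R :: "nat set \<Rightarrow> (nat \<Rightarrow> real) \<Rightarrow> real \<Rightarrow> (nat \<Rightarrow> real)"
    and N :: "nat set" and c :: "nat \<Rightarrow> real" and E :: real
    and h :: "((nat \<Rightarrow> real) \<times> (nat \<Rightarrow> real)) list"
  assumes "standard_rule R"
    and "historical_claims_problem N c E h"
  defines "ct \<equiv> adjusted_claims c h"
  shows "(\<exists>lam::real. 0 \<le> lam \<and> (\<Sum>i\<in>N. min (c i) (R N ct E i + lam)) = E)
    \<and> (sum c N > E \<longrightarrow> (\<exists>!lam::real. 0 \<le> lam \<and> (\<Sum>i\<in>N. min (c i) (R N ct E i + lam)) = E))
    \<and> (sum c N = E \<longrightarrow>
        (\<exists>l1 l2::real. 0 \<le> l1 \<and> 0 \<le> l2 \<and> l1 \<noteq> l2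
           \<and> (\<Sum>i\<in>N. min (c i) (R N ct E i + l1)) = E
           \<and> (\<Sum>i\<in>N. min (c i) (R N ct E i + l2)) = E)
      \<and> (\<forall>l1 l2::real. 0 \<le> l1 \<and> 0 \<le> l2
           \<and> (\<Sum>i\<in>N. min (c i) (R N ct E i + l1)) = E
           \<and> (\<Sum>i\<in>N. min (c i) (R N ct E i + l2)) = E
           \<longrightarrow> (\<forall>i\<in>N. min (c i) (R N ct E i + l1) = min (c i) (R N ct E i + l2))))"
proof -
  define x where "x = R N ct E"
  have cp: "claims_problem N c E" and "is_history N h"
    using assms(2) unfolding historical_claims_problem_def by auto
  then have "is_allocation N ct E x"
    using assms(1) claims_problem_adjusted_claims
    unfolding standard_rule_def ct_def x_def by blast
  then have sx: "sum x N = E" unfolding is_allocation_def by simp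
  have fin: "finite N" and EC: "E \<le> sum c N" using cp unfolding claims_problem_def by auto
  have ex: "\<exists>l\<ge>0. (\<Sum>i\<in>N. min (c i) (x i + l)) = E"
    using sum_min_shift_exists[OF fin sx EC] .
  have uniq: "E < sum c N \<Longrightarrow> \<exists>!l. 0 \<le> l \<and> (\<Sum>i\<in>N. min (c i) (x i + l)) = E"
    using ex sum_min_shift_unique[OF fin] by blast
  have agree: "\<forall>l1 l2. 0 \<le> l1 \<and> 0 \<le> l2
      \<and> (\<Sum>i\<in>N. min (c i) (x i + l1)) = E \<and> (\<Sum>i\<in>N. min (c i) (x i + l2)) = E
      \<longrightarrow> (\<forall>i\<in>N. min (c i) (x i + l1) = min (c i) (x i + l2))"
  proof (intro allI impI ballI)
    fix l1 l2 i
    assume "0 \<le> l1 \<and> 0 \<le> l2 \<and> (\<Sum>i\<in>N. min (c i) (x i + l1)) = E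
      \<and> (\<Sum>i\<in>N. min (c i) (x i + l2)) = E" and "i \<in> N"
    then show "min (c i) (x i + l1) = min (c i) (x i + l2)"
      by (intro sum_min_shift_eq_imp_summand_eq[OF fin \<open>i \<in> N\<close>]) simp
  qed
  show ?thesis
    unfolding x_def[symmetric]
    by (intro conjI impI ex agree) (erule uniq sum_min_shift_not_unique[OF fin])+
qed

end
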